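(* Let $\mu$ be a probability measure on $[0,\infty)$ with mean $1$ such that $\Lambda_\mu$ is finite on a neighborhood of $0$, and let $P$ be a probability measure on $(\Omega,\mathcal{M})$. Then $\mathcal{U}^\mu(P)$ contains every probability measure $Q$ with $Q\ll P$ such that $dQ/dP$ has distribution $\mu$ under $P$. Every such $Q$ satisfies $\Lambda_Q^{\log(dQ/dP)}(\lambda)=\Lambda_\mu(\lambda)$ for all $\lambda\ge0$ and $$R(Q\|P)=\frac{d}{d\lambda}\Big|_{\lambda=0}\Lambda_\mu(\lambda)=1+\int_0^\infty G_\mu(z)\log(z)\,dz.$$ More generally, for every $Q\in\mathcal{U}^\mu(P)$, $$R(Q\|P)\le\frac{d}{d\lambda}\Big|_{\lambda=0}\Lambda_\mu(\lambda)=1+\int_0^\infty G_\mu(z)\log(z)\,dz.$$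
   Context: $R(Q\|P)=\int\log(dQ/dP)\,dQ$ if $Q\ll P$, $+\infty$ otherwise. $\Lambda_Q^f(\lambda)=\log E_Q[e^{\lambda f}]$. For a probability measure $\mu$ on $[0,\infty)$ with mean $1$, define $G_\mu(r)=\mu([r,\infty))$ for $r\ge0$ and $\Lambda_\mu(\lambda)=\log\big((\lambda+1)\int_0^\infty G_\mu(z)z^\lambda\,dz\big)$ for $\lambda\ge0$ (so $\Lambda_\mu(0)=0$, $\Lambda_\mu\ge 0$). If $\Lambda_\mu$ is finite on a neighborhood of $0$, set $\mathcal{U}^\mu(P)=\{Q \text{ probability measure}: Q\ll P,\ \Lambda_Q^{\log(dQ/dP)}(\lambda)\le\Lambda_\mu(\lambda)\ \text{for all }\lambda>0\}$. *)

theory Defs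
  imports "HOL-Probability.Probability"
begin

definition dens :: "'a measure \<Rightarrow> 'a measure \<Rightarrow> 'a \<Rightarrow> real" where
  "dens P Q x = enn2real (RN_deriv P Q x)"

text \<open>Relative entropy R(Q||P), extended-real valued; +infinity unless Q << P.
  The negative part of log(dQ/dP) is always Q-integrable, so the difference is well defined.\<close>
definition relent :: "'a measure \<Rightarrow> 'a measure \<Rightarrow> ereal" where
  "relent Q P =
     (if absolutely_continuous P Q \<and> sets Q = sets P then
        enn2ereal (\<integral>\<^sup>+ x. ennreal (ln (dens P Q x)) \<partial>Q)
        - enn2ereal (\<integral>\<^sup>+ x. ennreal (- ln (dens P Q x)) \<partial>Q)
      else \<infinity>)"

definition LambdaQ :: "'a measure \<Rightarrow> ('a \<Rightarrow> real) \<Rightarrow> real \<Rightarrow> ereal" where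
  "LambdaQ Q f l =
     (let I = \<integral>\<^sup>+ x. ennreal (exp (l * f x)) \<partial>Q
      in if I = \<infinity> then \<infinity> else ereal (ln (enn2real I)))"

definition Gmu :: "real measure \<Rightarrow> real \<Rightarrow> real" where
  "Gmu \<mu> r = measure \<mu> {r..}"

definition Lambda_mu :: "real measure \<Rightarrow> real \<Rightarrow> ereal" where
  "Lambda_mu \<mu> l =
     (let I = \<integral>\<^sup>+ z. ennreal (indicator {0<..} z * Gmu \<mu> z * z powr l) \<partial>lborel
      in if I = \<infinity> then \<infinity> else ereal (ln ((l + 1) * enn2real I)))"

definition Umu :: "real measure \<Rightarrow> 'a measure \<Rightarrow> 'a measure set" where
  "Umu \<mu> P = {Q. prob_space Q \<and> sets Q = sets P \<and> absolutely_continuous P Q \<and>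
      (\<forall>l>0. LambdaQ Q (\<lambda>x. ln (dens P Q x)) l \<le> Lambda_mu \<mu> l)}"

end

theory Submission
  imports Defs
begin

text \<open>By the layer-cake formula, \<open>(\<lambda>+1) \<integral>\<^sub>0\<^sup>\<infinity> G\<^sub>\<mu>(z) z\<^sup>\<lambda> dz = E\<^sub>\<mu>[X\<^sup>\<lambda>\<^sup>+\<^sup>1]\<close>, so
  \<open>\<Lambda>\<^sub>\<mu>(\<lambda>) = log E\<^sub>\<mu>[X\<^sup>\<lambda>\<^sup>+\<^sup>1]\<close>. If \<open>D = dQ/dP\<close> has law \<open>\<mu>\<close> under \<open>P\<close>, then
  \<open>E\<^sub>Q[exp(\<lambda> log D)] = E\<^sub>P[D\<^sup>\<lambda>\<^sup>+\<^sup>1]\<close> is the same moment, hence \<open>\<Lambda>\<^sub>Q = \<Lambda>\<^sub>\<mu>\<close>.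
  Finiteness of these moments for small \<open>\<lambda>\<close> lets dominated convergence differentiate under
  the integral: \<open>\<Lambda>\<^sub>\<mu>'(0) = E\<^sub>\<mu>[X log X] = R(Q\<parallel>P)\<close>, and the same difference quotients taken
  inside the layer-cake integral identify this value with \<open>1 + \<integral> G\<^sub>\<mu> log\<close>. For an arbitrary
  \<open>Q \<in> U\<^sup>\<mu>(P)\<close>, Jensen's inequality gives \<open>\<lambda> R(Q\<parallel>P) \<le> \<Lambda>\<^sub>Q(\<lambda>) \<le> \<Lambda>\<^sub>\<mu>(\<lambda>)\<close>;
  divide by \<open>\<lambda>\<close> and let \<open>\<lambda> \<rightarrow> 0\<close>.\<close>

lemma Gmu_nonneg: "0 \<le> Gmu \<mu> z"
  unfolding Gmu_def by (rule measure_nonneg)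

lemma Gmu_le_1: "prob_space \<mu> \<Longrightarrow> Gmu \<mu> z \<le> 1"
  unfolding Gmu_def by (rule prob_space.prob_le_1)

lemma borel_measurable_Gmu [measurable]:
  assumes "prob_space \<mu>" "sets \<mu> = sets borel"
  shows "Gmu \<mu> \<in> borel_measurable borel"
proof -
  interpret prob_space \<mu> by fact
  have "antimono (Gmu \<mu>)"
    unfolding Gmu_def using assms(2) by (intro antimonoI finite_measure_mono) auto
  then have "(\<lambda>z. - Gmu \<mu> z) \<in> borel_measurable borel"
    by (intro borel_measurable_mono) (auto simp: antimono_def mono_def)
  then show ?thesis
    using borel_measurable_uminus[of "\<lambda>z. - Gmu \<mu> z"] by simp
qed

lemma nn_integral_Gmu_layer_cake:
  assumes \<mu>: "prob_space \<mu>" "sets \<mu> = sets borel"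
    and h: "h \<in> borel_measurable borel" "\<And>z. 0 \<le> h z"
  shows "(\<integral>\<^sup>+ z. ennreal (indicator {0<..} z * Gmu \<mu> z * h z) \<partial>lborel)
       = (\<integral>\<^sup>+ x. (\<integral>\<^sup>+ z. ennreal (indicator {0<..x} z * h z) \<partial>lborel) \<partial>\<mu>)"
proof -
  interpret prob_space \<mu> by fact
  interpret pair_sigma_finite lborel \<mu>
    by (simp add: lborel.sigma_finite_measure_axioms pair_sigma_finite_def sigma_finite_measure_axioms)
  have [measurable]: "h \<in> borel_measurable borel" "{z..} \<in> sets \<mu>" for z :: real
    using \<mu>(2) h(1) by auto
  have "(\<lambda>p. ennreal (indicator {0<..} (fst p) * h (fst p)) * (if fst p \<le> snd p then 1 else 0))
      \<in> borel_measurable (borel \<Otimes>\<^sub>M borel)"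
    by measurable
  also have "borel_measurable (borel \<Otimes>\<^sub>M borel) = borel_measurable (lborel \<Otimes>\<^sub>M \<mu>)"
    by (intro measurable_cong_sets sets_pair_measure_cong) (auto simp: \<mu>(2))
  also have "(\<lambda>p. ennreal (indicator {0<..} (fst p) * h (fst p)) * (if fst p \<le> snd p then 1 else 0))
      = (\<lambda>(z, x). ennreal (indicator {0<..} z * h z) * indicator {z..} x)"
    by (auto simp: indicator_def fun_eq_iff)
  finally have meas: "(\<lambda>(z, x). ennreal (indicator {0<..} z * h z) * indicator {z..} x)
      \<in> borel_measurable (lborel \<Otimes>\<^sub>M \<mu>)" .
  have "(\<integral>\<^sup>+ z. ennreal (indicator {0<..} z * Gmu \<mu> z * h z) \<partial>lborel)
      = (\<integral>\<^sup>+ z. (\<integral>\<^sup>+ x. ennreal (indicator {0<..} z * h z) * indicator {z..} x \<partial>\<mu>) \<partial>lborel)"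
  proof (rule nn_integral_cong)
    fix z :: real
    have "ennreal (indicator {0<..} z * Gmu \<mu> z * h z) = ennreal (indicator {0<..} z * h z) * emeasure \<mu> {z..}"
      using h(2)[of z] Gmu_nonneg[of \<mu> z]
      by (simp add: Gmu_def emeasure_eq_measure ennreal_mult'' mult_ac)
    then show "ennreal (indicator {0<..} z * Gmu \<mu> z * h z)
        = (\<integral>\<^sup>+ x. ennreal (indicator {0<..} z * h z) * indicator {z..} x \<partial>\<mu>)"
      by (simp add: nn_integral_cmult_indicator)
  qed
  also have "\<dots> = (\<integral>\<^sup>+ x. (\<integral>\<^sup>+ z. ennreal (indicator {0<..} z * h z) * indicator {z..} x \<partial>lborel) \<partial>\<mu>)"
    using Fubini'[OF meas, symmetric] by simp
  also have "\<dots> = (\<integral>\<^sup>+ x. (\<integral>\<^sup>+ z. ennreal (indicator {0<..x} z * h z) \<partial>lborel) \<partial>\<mu>)"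
    by (intro nn_integral_cong) (auto simp: indicator_def)
  finally show ?thesis .
qed

lemma nn_integral_powr_0_to:
  assumes "-1 < l" "0 \<le> x"
  shows "(\<integral>\<^sup>+ z. ennreal (indicator {0<..x} z * z powr l) \<partial>lborel) = ennreal (x powr (l+1) / (l+1))"
proof -
  have "(\<integral>\<^sup>+ z. ennreal (indicator {0<..x} z * z powr l) \<partial>lborel)
      = (\<integral>\<^sup>+ z. ennreal (indicator {0..x} z * z powr l) \<partial>lborel)"
    by (intro nn_integral_cong) (auto simp: indicator_def)
  also have "\<dots> = ennreal (x powr (l+1) / (l+1))"
    by (rule nn_integral_has_integral_lebesgue[OF _ has_integral_powr_from_0[OF assms]]) auto
  finally show ?thesis .
qed

definition nn_moment :: "real measure \<Rightarrow> real \<Rightarrow> ennreal" where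
  "nn_moment \<mu> p = (\<integral>\<^sup>+ x. ennreal (x powr p) \<partial>\<mu>)"

lemma nn_integral_Gmu_powr:
  assumes \<mu>: "prob_space \<mu>" "sets \<mu> = sets borel" "AE x in \<mu>. 0 \<le> x" and l: "-1 < l"
  shows "ennreal (l+1) * (\<integral>\<^sup>+ z. ennreal (indicator {0<..} z * Gmu \<mu> z * z powr l) \<partial>lborel)
    = nn_moment \<mu> (l+1)"
proof -
  have "(\<integral>\<^sup>+ z. ennreal (indicator {0<..} z * Gmu \<mu> z * z powr l) \<partial>lborel)
      = (\<integral>\<^sup>+ x. (\<integral>\<^sup>+ z. ennreal (indicator {0<..x} z * z powr l) \<partial>lborel) \<partial>\<mu>)"
    by (rule nn_integral_Gmu_layer_cake[OF \<mu>(1,2)]) auto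
  also have "\<dots> = (\<integral>\<^sup>+ x. ennreal (x powr (l+1) / (l+1)) \<partial>\<mu>)"
    using \<mu>(3) by (intro nn_integral_cong_AE) (auto simp: nn_integral_powr_0_to[OF l])
  also have "ennreal (l+1) * \<dots> = (\<integral>\<^sup>+ x. ennreal (l+1) * ennreal (x powr (l+1) / (l+1)) \<partial>\<mu>)"
    using \<mu>(2) by (intro nn_integral_cmult[symmetric]) auto
  also have "\<dots> = nn_moment \<mu> (l+1)"
    unfolding nn_moment_def using l by (intro nn_integral_cong) (simp add: ennreal_mult[symmetric])
  finally show ?thesis .
qed

lemma Lambda_mu_eq_ln_nn_moment:
  assumes "prob_space \<mu>" "sets \<mu> = sets borel" "AE x in \<mu>. 0 \<le> x" and l: "-1 < l"
  shows "Lambda_mu \<mu> l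
    = (if nn_moment \<mu> (l+1) = \<infinity> then \<infinity> else ereal (ln (enn2real (nn_moment \<mu> (l+1)))))"
proof -
  define J where "J = (\<integral>\<^sup>+ z. ennreal (indicator {0<..} z * Gmu \<mu> z * z powr l) \<partial>lborel)"
  have NJ: "nn_moment \<mu> (l+1) = ennreal (l+1) * J"
    using nn_integral_Gmu_powr[OF assms] by (simp add: J_def)
  have "J = \<infinity> \<longleftrightarrow> nn_moment \<mu> (l+1) = \<infinity>"
    using l by (simp add: NJ ennreal_mult_eq_top_iff)
  moreover have "(l+1) * enn2real J = enn2real (nn_moment \<mu> (l+1))"
    using l by (simp add: NJ enn2real_mult)
  ultimately show ?thesis
    unfolding Lambda_mu_def J_def[symmetric] Let_def by simp
qed

lemma tendsto_powr_diff_quotient: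
  fixes z :: real
  assumes "0 < z"
  shows "((\<lambda>l. (z powr l - 1) / l) \<longlongrightarrow> ln z) (at_right 0)"
proof -
  have "((\<lambda>l. exp (l * ln z)) has_real_derivative exp (0 * ln z) * ln z) (at 0 within {0<..})"
    by (auto intro!: derivative_eq_intros)
  then have "((\<lambda>l. (exp (l * ln z) - exp (0 * ln z)) / (l - 0)) \<longlongrightarrow> exp (0 * ln z) * ln z) (at_right 0)"
    by (simp add: has_field_derivative_iff)
  then show ?thesis
    using assms by (simp add: powr_def)
qed

lemma x_mul_neg_ln_le_1:
  fixes x :: real
  assumes "0 \<le> x"
  shows "x * - ln x \<le> 1"
proof (cases "x = 0")
  case False
  then have x: "0 < x"
    using assms by simp
  have "x * - ln x \<le> x * (1/x - 1)"
    using ln_le_minus_one[of "1/x"] x by (intro mult_left_mono) (auto simp: ln_div)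
  also have "\<dots> \<le> 1"
    using x by (simp add: algebra_simps)
  finally show ?thesis .
qed simp

lemma abs_exp_diff_quotient_le:
  fixes a l \<delta> :: real
  assumes l: "0 < l" "l \<le> \<delta>"
  shows "\<bar>(exp (l*a) - 1) / l\<bar> \<le> (if a \<le> 0 then - a else exp (2*\<delta>*a) / \<delta>)"
proof (cases "a \<le> 0")
  case True
  have "exp (l*a) \<le> 1"
    using True l by (simp add: mult_nonneg_nonpos)
  then have "\<bar>(exp (l*a) - 1) / l\<bar> = (1 - exp (l*a)) / l"
    using l by (simp add: abs_div_pos)
  also have "\<dots> \<le> (- (l*a)) / l"
    using exp_ge_add_one_self[of "l*a"] l by (intro divide_right_mono) linarith+
  finally show ?thesis
    using True l by simp
next
  case False
  have "exp (l*a) * (1 - l*a) \<le> exp (l*a) * exp (-(l*a))"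
    using exp_ge_add_one_self[of "-(l*a)"] by (intro mult_left_mono) auto
  then have mvt: "exp (l*a) - 1 \<le> l*a*exp (l*a)"
    by (simp add: exp_minus algebra_simps)
  have "\<bar>(exp (l*a) - 1) / l\<bar> = (exp (l*a) - 1) / l"
    using False l by (simp add: abs_div_pos)
  also have "\<dots> \<le> a * exp (l*a)"
    using mvt l by (simp add: divide_le_eq mult_ac)
  also have "\<dots> \<le> a * exp (\<delta>*a)"
    using False l by (intro mult_left_mono) auto
  also have "\<dots> \<le> (exp (\<delta>*a) / \<delta>) * exp (\<delta>*a)"
  proof (intro mult_right_mono)
    have "\<delta>*a \<le> exp (\<delta>*a)"
      using exp_ge_add_one_self[of "\<delta>*a"] by linarith
    then show "a \<le> exp (\<delta>*a) / \<delta>"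
      using l by (simp add: field_simps)
  qed simp
  also have "\<dots> = exp (2*\<delta>*a) / \<delta>"
    by (simp add: exp_add[symmetric] algebra_simps)
  finally show ?thesis
    using False by simp
qed

lemma abs_powr_diff_quotient_le:
  fixes z l \<delta> :: real
  assumes z: "0 < z" and l: "0 < l" "l \<le> \<delta>"
  shows "\<bar>(z powr l - 1) / l\<bar> \<le> (if z \<le> 1 then 2 * z powr (-1/2) else z powr (2*\<delta>) / \<delta>)"
proof -
  have "\<bar>(z powr l - 1) / l\<bar> \<le> (if ln z \<le> 0 then - ln z else exp (2*\<delta>*ln z) / \<delta>)"
    using abs_exp_diff_quotient_le[OF l, of "ln z"] z by (simp add: powr_def mult_ac)
  moreover have "- ln z \<le> 2 * z powr (-1/2)"
    using exp_ge_add_one_self[of "- ln z / 2"] z by (simp add: powr_def)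
  ultimately show ?thesis
    using z by (auto simp: powr_def mult_ac split: if_splits)
qed

lemma abs_powr_add_1_diff_quotient_le:
  fixes x l \<delta> :: real
  assumes x: "0 \<le> x" and l: "0 < l" "l \<le> \<delta>"
  shows "\<bar>(x powr (l+1) - x powr 1) / l\<bar> \<le> 1 + x powr (2*\<delta>+1) / \<delta>"
proof (cases "x = 0")
  case False
  then have x: "0 < x"
    using x by simp
  have "(x powr (l+1) - x powr 1) / l = x * ((exp (l * ln x) - 1) / l)"
    using x by (simp add: powr_def exp_add algebra_simps diff_divide_distrib)
  then have "\<bar>(x powr (l+1) - x powr 1) / l\<bar> = x * \<bar>(exp (l * ln x) - 1) / l\<bar>"
    using x by (simp only: abs_mult abs_of_pos)
  also have "\<dots> \<le> x * (if ln x \<le> 0 then - ln x else exp (2*\<delta>*ln x) / \<delta>)"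
    using abs_exp_diff_quotient_le[OF l, of "ln x"] x by (intro mult_left_mono) auto
  also have "\<dots> \<le> 1 + x powr (2*\<delta>+1) / \<delta>"
  proof (cases "ln x \<le> 0")
    case True
    then show ?thesis
      using x_mul_neg_ln_le_1[of x] x l by (simp add: add_increasing2)
  next
    case False
    have "x * (exp (2*\<delta>*ln x) / \<delta>) = x powr (2*\<delta>+1) / \<delta>"
      using x by (simp add: powr_def exp_add algebra_simps)
    moreover have "0 \<le> x powr (2*\<delta>+1) / \<delta>"
      using l by simp
    ultimately show ?thesis
      using False by (simp only: if_False)
  qed
  finally show ?thesis .
qed (use l in simp)

lemma eventually_at_right_0_less:
  "0 < (d::real) \<Longrightarrow> \<forall>\<^sub>F l in at_right 0. 0 < l \<and> l < d"
  using eventually_at_right[of 0 d "\<lambda>l. 0 < l \<and> l < d"] by auto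

lemma integral_dominated_convergence_at_right_0:
  fixes s :: "real \<Rightarrow> 'a \<Rightarrow> real" and w f :: "'a \<Rightarrow> real"
  assumes f: "f \<in> borel_measurable M" and s: "\<And>t. s t \<in> borel_measurable M"
    and w: "integrable M w"
    and lim: "AE x in M. ((\<lambda>t. s t x) \<longlongrightarrow> f x) (at_right 0)"
    and bound: "\<forall>\<^sub>F t in at_right 0. AE x in M. norm (s t x) \<le> w x"
  shows "((\<lambda>t. integral\<^sup>L M (s t)) \<longlongrightarrow> integral\<^sup>L M f) (at_right 0)" "integrable M f"
proof -
  have lim': "AE x in M. ((\<lambda>t. s (inverse t) x) \<longlongrightarrow> f x) at_top"
    using lim by eventually_elim (simp add: filterlim_at_right_to_top)
  have bound': "\<forall>\<^sub>F t in at_top. AE x in M. norm (s (inverse t) x) \<le> w x"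
    using bound by (simp add: eventually_at_right_to_top)
  have "((\<lambda>t. integral\<^sup>L M (s (inverse t))) \<longlongrightarrow> integral\<^sup>L M f) at_top"
    by (rule integral_dominated_convergence_at_top[OF f s w lim' bound'])
  then show "((\<lambda>t. integral\<^sup>L M (s t)) \<longlongrightarrow> integral\<^sup>L M f) (at_right 0)"
    by (simp add: filterlim_at_right_to_top)
  show "integrable M f"
    by (rule integrable_dominated_convergence_at_top[OF f s w lim' bound'])
qed

lemma measurable_dens [measurable]: "dens P Q \<in> borel_measurable P"
  unfolding dens_def by measurable

lemma nn_integral_dens_change:
  assumes P: "prob_space P" and Q: "prob_space Q" "sets Q = sets P" "absolutely_continuous P Q"
    and [measurable]: "\<phi> \<in> borel_measurable borel"
  shows "(\<integral>\<^sup>+ y. ennreal (\<phi> (dens P Q y)) \<partial>Q) = (\<integral>\<^sup>+ y. ennreal (dens P Q y * \<phi> (dens P Q y)) \<partial>P)"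
proof -
  interpret P: prob_space P by fact
  have "AE y in P. RN_deriv P Q y \<noteq> \<infinity>"
    by (rule P.RN_deriv_finite[OF _ Q(3) Q(2)]) (use Q(1) prob_space_imp_sigma_finite in auto)
  then have RN: "AE y in P. RN_deriv P Q y = ennreal (dens P Q y)"
    unfolding dens_def by eventually_elim (simp add: ennreal_enn2real_if)
  have "(\<integral>\<^sup>+ y. ennreal (\<phi> (dens P Q y)) \<partial>Q)
      = (\<integral>\<^sup>+ y. ennreal (\<phi> (dens P Q y)) \<partial>density P (RN_deriv P Q))"
    by (simp only: P.density_RN_deriv[OF Q(3) Q(2)])
  also have "\<dots> = (\<integral>\<^sup>+ y. RN_deriv P Q y * ennreal (\<phi> (dens P Q y)) \<partial>P)"
    by (rule nn_integral_density) auto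
  also have "\<dots> = (\<integral>\<^sup>+ y. ennreal (dens P Q y * \<phi> (dens P Q y)) \<partial>P)"
    using RN by (intro nn_integral_cong_AE) (auto simp: ennreal_mult' dens_def)
  finally show ?thesis .
qed

lemma nn_integral_dens_distr:
  assumes "prob_space P" "prob_space Q" "sets Q = sets P" "absolutely_continuous P Q"
    and [measurable]: "\<phi> \<in> borel_measurable borel"
  shows "(\<integral>\<^sup>+ y. ennreal (\<phi> (dens P Q y)) \<partial>Q) = (\<integral>\<^sup>+ x. ennreal (x * \<phi> x) \<partial>distr P borel (dens P Q))"
  unfolding nn_integral_dens_change[OF assms] by (rule nn_integral_distr[symmetric]) auto

lemma LambdaQ_ln_dens_eq_Lambda_mu_distr:
  assumes P: "prob_space P" and Q: "prob_space Q" "sets Q = sets P" "absolutely_continuous P Q"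
    and l: "-1 < l"
  shows "LambdaQ Q (\<lambda>x. ln (dens P Q x)) l = Lambda_mu (distr P borel (dens P Q)) l"
proof -
  let ?\<nu> = "distr P borel (dens P Q)"
  have \<nu>: "prob_space ?\<nu>" "sets ?\<nu> = sets borel" "AE x in ?\<nu>. 0 \<le> x"
  proof -
    show "prob_space ?\<nu>"
      by (rule prob_space.prob_space_distr[OF P]) simp
    show "AE x in ?\<nu>. 0 \<le> x"
      by (subst AE_distr_iff) (auto simp: dens_def)
  qed simp
  have "(\<integral>\<^sup>+ x. ennreal (exp (l * ln (dens P Q x))) \<partial>Q) = (\<integral>\<^sup>+ x. ennreal (x * exp (l * ln x)) \<partial>?\<nu>)"
    by (rule nn_integral_dens_distr[OF P Q]) measurable
  also have "\<dots> = nn_moment ?\<nu> (l+1)"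
    unfolding nn_moment_def using \<nu>(3)
    by (intro nn_integral_cong_AE) (auto simp: powr_def exp_add algebra_simps)
  finally show ?thesis
    unfolding LambdaQ_def Let_def Lambda_mu_eq_ln_nn_moment[OF \<nu> l] by simp
qed

lemma relent_eq_integral_distr:
  assumes P: "prob_space P" and Q: "prob_space Q" "sets Q = sets P" "absolutely_continuous P Q"
    and int: "integrable (distr P borel (dens P Q)) (\<lambda>x. x * ln x)"
  shows "relent Q P = ereal (\<integral>x. x * ln x \<partial>distr P borel (dens P Q))"
proof -
  obtain r q where "0 \<le> r" "0 \<le> q"
    "(\<integral>\<^sup>+ x. ennreal (x * ln x) \<partial>distr P borel (dens P Q)) = ennreal r"
    "(\<integral>\<^sup>+ x. ennreal (- (x * ln x)) \<partial>distr P borel (dens P Q)) = ennreal q"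
    "(\<lambda>x. x * ln x) \<in> borel_measurable (distr P borel (dens P Q))"
    "(\<integral>x. x * ln x \<partial>distr P borel (dens P Q)) = r - q"
    by (rule integrableE[OF int])
  moreover have "(\<integral>\<^sup>+ x. ennreal (ln (dens P Q x)) \<partial>Q) = (\<integral>\<^sup>+ x. ennreal (x * ln x) \<partial>distr P borel (dens P Q))"
    using nn_integral_dens_distr[OF P Q, of ln] by simp
  moreover have "(\<integral>\<^sup>+ x. ennreal (- ln (dens P Q x)) \<partial>Q)
      = (\<integral>\<^sup>+ x. ennreal (- (x * ln x)) \<partial>distr P borel (dens P Q))"
    using nn_integral_dens_distr[OF P Q, of "\<lambda>x. - ln x"] by simp
  ultimately show ?thesis
    unfolding relent_def using Q by simp
qed

lemma relent_eq_integral: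
  assumes "sets Q = sets P" "absolutely_continuous P Q" "integrable Q (\<lambda>x. ln (dens P Q x))"
  shows "relent Q P = ereal (\<integral>x. ln (dens P Q x) \<partial>Q)"
proof -
  obtain r q where "0 \<le> r" "0 \<le> q"
    "(\<integral>\<^sup>+ x. ennreal (ln (dens P Q x)) \<partial>Q) = ennreal r"
    "(\<integral>\<^sup>+ x. ennreal (- ln (dens P Q x)) \<partial>Q) = ennreal q"
    "(\<lambda>x. ln (dens P Q x)) \<in> borel_measurable Q" "(\<integral>x. ln (dens P Q x) \<partial>Q) = r - q"
    by (rule integrableE[OF assms(3)])
  then show ?thesis
    unfolding relent_def using assms by simp
qed

lemma scaled_mean_le_LambdaQ:
  assumes "prob_space Q" "integrable Q f"
  shows "ereal (l * (\<integral>x. f x \<partial>Q)) \<le> LambdaQ Q f l"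
proof -
  interpret prob_space Q by fact
  define I where "I = (\<integral>\<^sup>+ x. ennreal (exp (l * f x)) \<partial>Q)"
  have [measurable]: "f \<in> borel_measurable Q"
    using assms(2) by (rule borel_measurable_integrable)
  show ?thesis
  proof (cases "I = \<infinity>")
    case False
    then have "integrable Q (\<lambda>x. exp (l * f x))"
      by (intro integrableI_nn_integral_finite[where x="enn2real I"]) (auto simp: I_def ennreal_enn2real_if)
    then have "exp (expectation (\<lambda>x. l * f x)) \<le> expectation (\<lambda>x. exp (l * f x))"
      using assms(2) by (intro jensens_inequality[where I=UNIV] exp_convex) auto
    also have "\<dots> = enn2real I"
      unfolding I_def by (rule integral_eq_nn_integral) auto
    finally have "ln (exp (l * expectation f)) \<le> ln (enn2real I)"
      by (intro ln_mono) auto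
    then have "l * expectation f \<le> ln (enn2real I)"
      by simp
    then show ?thesis
      using False unfolding LambdaQ_def I_def[symmetric] Let_def by simp
  qed (simp add: LambdaQ_def I_def[symmetric] Let_def)
qed

lemma integrable_ln_dens:
  assumes P: "prob_space P" and Q: "prob_space Q" "sets Q = sets P" "absolutely_continuous P Q"
    and l: "0 < l" "LambdaQ Q (\<lambda>x. ln (dens P Q x)) l \<noteq> \<infinity>"
  shows "integrable Q (\<lambda>x. ln (dens P Q x))"
proof -
  interpret P: prob_space P by fact
  have [measurable]: "(\<lambda>x. ln (dens P Q x)) \<in> borel_measurable Q"
    using Q(2) by (simp add: measurable_cong_sets[OF Q(2) refl])
  have "(\<integral>\<^sup>+ y. ennreal (- ln (dens P Q y)) \<partial>Q) = (\<integral>\<^sup>+ y. ennreal (dens P Q y * - ln (dens P Q y)) \<partial>P)"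
    using nn_integral_dens_change[OF P Q, of "\<lambda>x. - ln x"] by simp
  also have "\<dots> \<le> (\<integral>\<^sup>+ y. 1 \<partial>P)"
    using x_mul_neg_ln_le_1 by (intro nn_integral_mono) (simp add: dens_def ennreal_le_1)
  finally have neg: "(\<integral>\<^sup>+ y. ennreal (- ln (dens P Q y)) \<partial>Q) \<noteq> \<infinity>"
    using P.emeasure_space_1 by (auto simp: top_unique)
  have "ennreal l * (\<integral>\<^sup>+ y. ennreal (ln (dens P Q y)) \<partial>Q)
      = (\<integral>\<^sup>+ y. ennreal (l * ln (dens P Q y)) \<partial>Q)"
    using l(1) by (subst nn_integral_cmult[symmetric]) (auto simp: ennreal_mult')
  also have "\<dots> \<le> (\<integral>\<^sup>+ y. ennreal (exp (l * ln (dens P Q y))) \<partial>Q)"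
    by (intro nn_integral_mono ennreal_leI order_trans[OF _ exp_ge_add_one_self]) simp
  also have "\<dots> < \<infinity>"
    using l(2) by (auto simp: LambdaQ_def Let_def top.not_eq_extremum split: if_splits)
  finally have pos: "(\<integral>\<^sup>+ y. ennreal (ln (dens P Q y)) \<partial>Q) \<noteq> \<infinity>"
    using l(1) by (auto simp: ennreal_mult_eq_top_iff)
  show ?thesis
    using pos neg by (simp add: real_integrable_def)
qed

lemma integrable_powr_neg_half_unit_interval:
  "integrable lborel (\<lambda>z::real. indicator {0..1} z * z powr (-1/2))"
proof -
  have "(\<integral>\<^sup>+ z. ennreal (indicator {0..1} z * z powr (-1/2)) \<partial>lborel)
      = ennreal (1 powr (-1/2+1) / (-1/2+1))"
    by (rule nn_integral_has_integral_lebesgue[OF _ has_integral_powr_from_0]) auto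
  then show ?thesis
    by (intro integrableI_nn_integral_finite[where x="1 powr (-1/2+1) / (-1/2+1)"]) auto
qed

lemma abs_Gmu_diff_quotient_le:
  assumes "prob_space \<mu>" and l: "0 < l" "l \<le> \<delta>"
  shows "\<bar>indicator {0<..} z * Gmu \<mu> z * ((z powr l - z powr 0) / l)\<bar>
    \<le> 2 * (indicator {0..1} z * z powr (-1/2)) + indicator {0<..} z * Gmu \<mu> z * z powr (2*\<delta>) / \<delta>"
proof (cases "0 < z")
  case True
  have G: "0 \<le> Gmu \<mu> z" "Gmu \<mu> z \<le> 1"
    using Gmu_nonneg Gmu_le_1[OF assms(1)] by auto
  have "\<bar>indicator {0<..} z * Gmu \<mu> z * ((z powr l - z powr 0) / l)\<bar> = Gmu \<mu> z * \<bar>(z powr l - 1) / l\<bar>"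
    using True G by (simp add: abs_mult)
  also have "\<dots> \<le> Gmu \<mu> z * (if z \<le> 1 then 2 * z powr (-1/2) else z powr (2*\<delta>) / \<delta>)"
    using abs_powr_diff_quotient_le[OF True l] G by (intro mult_left_mono) auto
  also have "\<dots> \<le> 2 * (indicator {0..1} z * z powr (-1/2)) + indicator {0<..} z * Gmu \<mu> z * z powr (2*\<delta>) / \<delta>"
  proof (cases "z \<le> 1")
    case True
    have "Gmu \<mu> z * (2 * z powr (-1/2)) \<le> 2 * z powr (-1/2)"
      using G by (intro mult_left_le_one_le) auto
    moreover have "0 \<le> Gmu \<mu> z * z powr (2*\<delta>) / \<delta>"
      using G l by simp
    moreover have "indicator {0..1} z = (1::real)" "indicator {0<..} z = (1::real)"
      using True \<open>0 < z\<close> by auto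
    ultimately show ?thesis
      using True by simp
  qed (use \<open>0 < z\<close> G l in simp)
  finally show ?thesis .
qed (use l Gmu_nonneg[of \<mu> z] in simp)

locale mean_one_law =
  fixes \<mu> :: "real measure" and \<epsilon> :: real
  assumes prob: "prob_space \<mu>" and sets_mu: "sets \<mu> = sets borel"
    and nonneg: "AE x in \<mu>. 0 \<le> x" and mean: "(\<integral>x. x \<partial>\<mu>) = 1"
    and eps: "0 < \<epsilon>" and Lambda_mu_finite: "\<And>l. 0 \<le> l \<Longrightarrow> l < \<epsilon> \<Longrightarrow> Lambda_mu \<mu> l < \<infinity>"
begin

sublocale prob_space \<mu>
  by (rule prob)

definition M :: "real \<Rightarrow> real" where
  "M l = (\<integral>x. x powr (l+1) \<partial>\<mu>)"

lemma measurable_mu_eq: "measurable \<mu> = measurable borel"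
  using sets_mu by (intro ext measurable_cong_sets) auto

lemma borel_measurable_powr_mu [measurable]: "(\<lambda>x. x powr p) \<in> borel_measurable \<mu>"
  unfolding measurable_mu_eq by measurable

lemma nn_moment_eq_M: "0 \<le> l \<Longrightarrow> l < \<epsilon> \<Longrightarrow> nn_moment \<mu> (l+1) = ennreal (M l)"
  and integrable_powr_add_1: "0 \<le> l \<Longrightarrow> l < \<epsilon> \<Longrightarrow> integrable \<mu> (\<lambda>x. x powr (l+1))"
proof -
  assume l: "0 \<le> l" "l < \<epsilon>"
  have fin: "nn_moment \<mu> (l+1) \<noteq> \<infinity>"
    using Lambda_mu_finite[OF l] Lambda_mu_eq_ln_nn_moment[OF prob sets_mu nonneg, of l] l
    by (auto split: if_splits)
  have "M l = enn2real (nn_moment \<mu> (l+1))"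
    unfolding M_def nn_moment_def by (rule integral_eq_nn_integral) auto
  with fin show "nn_moment \<mu> (l+1) = ennreal (M l)"
    by (simp add: ennreal_enn2real_if)
  with fin show "integrable \<mu> (\<lambda>x. x powr (l+1))"
    unfolding nn_moment_def by (intro integrableI_nn_integral_finite[where x="M l"]) auto
qed

lemma M_nonneg: "0 \<le> M l"
  unfolding M_def by (intro Bochner_Integration.integral_nonneg) simp

lemma M_0: "M 0 = 1"
  using nonneg mean unfolding M_def
  by (subst integral_cong_AE[where g="\<lambda>x. x"]) (auto simp: measurable_mu_eq)

lemma Lambda_mu_eq_ln_M:
  assumes "0 \<le> l" "l < \<epsilon>"
  shows "Lambda_mu \<mu> l = ereal (ln (M l))"
  using Lambda_mu_eq_ln_nn_moment[OF prob sets_mu nonneg, of l] nn_moment_eq_M[OF assms] M_nonneg assms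
  by simp

lemma integrable_x_ln_x: "integrable \<mu> (\<lambda>x. x * ln x)"
  and M_diff_quotient_tendsto: "((\<lambda>l. (M l - M 0) / l) \<longlongrightarrow> (\<integral>x. x * ln x \<partial>\<mu>)) (at_right 0)"
proof -
  define \<delta> where "\<delta> = \<epsilon> / 3"
  have \<delta>: "0 < \<delta>" "2*\<delta> < \<epsilon>"
    using eps by (auto simp: \<delta>_def)
  define s where "s l x = (x powr (l+1) - x powr 1) / l" for l x :: real
  have s_eq: "s l x = x * ((x powr l - 1) / l)" if "0 < x" for l x
    using that by (simp add: s_def powr_add algebra_simps diff_divide_distrib)
  have lim: "AE x in \<mu>. ((\<lambda>l. s l x) \<longlongrightarrow> x * ln x) (at_right 0)"
    using nonneg
  proof eventually_elim
    case (elim x)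
    show ?case
    proof (cases "x = 0")
      case False
      then have "0 < x"
        using elim by simp
      then show ?thesis
        unfolding s_eq[OF \<open>0 < x\<close>] by (intro tendsto_mult_left tendsto_powr_diff_quotient)
    qed (simp add: s_def)
  qed
  have bound: "\<forall>\<^sub>F l in at_right 0. AE x in \<mu>. norm (s l x) \<le> 1 + x powr (2*\<delta>+1) / \<delta>"
    using eventually_at_right_0_less[OF \<delta>(1)]
  proof eventually_elim
    case (elim l)
    show ?case
      using nonneg
      by eventually_elim (use abs_powr_add_1_diff_quotient_le[of _ l \<delta>] elim in \<open>auto simp: s_def\<close>)
  qed
  have dominating: "integrable \<mu> (\<lambda>x. 1 + x powr (2*\<delta>+1) / \<delta>)"
    using integrable_powr_add_1[of "2*\<delta>"] \<delta> by auto
  have measurable: "(\<lambda>x. x * ln x) \<in> borel_measurable \<mu>" "s l \<in> borel_measurable \<mu>" for l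
    by (auto simp: s_def[abs_def] measurable_mu_eq)
  note DCT = integral_dominated_convergence_at_right_0[OF measurable dominating lim bound]
  show "integrable \<mu> (\<lambda>x. x * ln x)"
    by (rule DCT(2))
  have "\<forall>\<^sub>F l in at_right 0. integral\<^sup>L \<mu> (s l) = (M l - M 0) / l"
    using eventually_at_right_0_less[OF eps]
    by eventually_elim
      (use integrable_powr_add_1[of 0] integrable_powr_add_1 eps
        in \<open>simp add: s_def[abs_def] M_def integral_diff\<close>)
  with DCT(1) show "((\<lambda>l. (M l - M 0) / l) \<longlongrightarrow> (\<integral>x. x * ln x \<partial>\<mu>)) (at_right 0)"
    by (rule Lim_transform_eventually)
qed

lemma Lambda_mu_has_derivative:
  "((\<lambda>l. real_of_ereal (Lambda_mu \<mu> l)) has_real_derivative (\<integral>x. x * ln x \<partial>\<mu>)) (at 0 within {0..})"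
proof -
  have "(M has_real_derivative (\<integral>x. x * ln x \<partial>\<mu>)) (at 0 within {0..})"
    using M_diff_quotient_tendsto by (simp add: has_field_derivative_iff at_within_Ici_at_right)
  from DERIV_chain2[OF DERIV_ln[of "M 0"] this]
  have "((\<lambda>l. ln (M l)) has_real_derivative (\<integral>x. x * ln x \<partial>\<mu>)) (at 0 within {0..})"
    by (simp add: M_0)
  then show ?thesis
    by (rule has_field_derivative_transform_within[OF _ eps])
      (auto simp: Lambda_mu_eq_ln_M dist_real_def)
qed

lemma integrable_Gmu_powr:
    "0 \<le> l \<Longrightarrow> l < \<epsilon> \<Longrightarrow> integrable lborel (\<lambda>z. indicator {0<..} z * Gmu \<mu> z * z powr l)"
  and integral_Gmu_powr:
    "0 \<le> l \<Longrightarrow> l < \<epsilon> \<Longrightarrow> (\<integral>z. indicator {0<..} z * Gmu \<mu> z * z powr l \<partial>lborel) = M l / (l+1)"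
proof -
  assume assms: "0 \<le> l" "l < \<epsilon>"
  define J where "J = (\<integral>\<^sup>+ z. ennreal (indicator {0<..} z * Gmu \<mu> z * z powr l) \<partial>lborel)"
  have l: "-1 < l"
    using assms by simp
  have "ennreal (l+1) * J = ennreal (M l)"
    using nn_integral_Gmu_powr[OF prob sets_mu nonneg l] nn_moment_eq_M[OF assms] by (simp add: J_def)
  then have "ennreal (1/(l+1)) * (ennreal (l+1) * J) = ennreal (1/(l+1)) * ennreal (M l)"
    by simp
  then have J: "J = ennreal (M l / (l+1))"
    using l M_nonneg[of l] by (simp add: ennreal_mult[symmetric] mult.assoc[symmetric])
  have nonneg_integrand: "0 \<le> indicator {0<..} z * Gmu \<mu> z * z powr l" for z
    using Gmu_nonneg[of \<mu> z] by simp
  have [measurable]: "Gmu \<mu> \<in> borel_measurable borel"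
    by (rule borel_measurable_Gmu[OF prob sets_mu])
  show "integrable lborel (\<lambda>z. indicator {0<..} z * Gmu \<mu> z * z powr l)"
    using nonneg_integrand J
    by (intro integrableI_nn_integral_finite[where x="M l / (l+1)"]) (auto simp: J_def)
  have "(\<integral>z. indicator {0<..} z * Gmu \<mu> z * z powr l \<partial>lborel) = enn2real J"
    unfolding J_def by (rule integral_eq_nn_integral) (use nonneg_integrand in auto)
  then show "(\<integral>z. indicator {0<..} z * Gmu \<mu> z * z powr l \<partial>lborel) = M l / (l+1)"
    using J l M_nonneg[of l] by simp
qed

lemma set_integrable_Gmu_ln: "set_integrable lborel {0<..} (\<lambda>z. Gmu \<mu> z * ln z)"
  and integral_Gmu_ln: "(LINT z:{0<..}|lborel. Gmu \<mu> z * ln z) = (\<integral>x. x * ln x \<partial>\<mu>) - 1"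
proof -
  define \<delta> where "\<delta> = \<epsilon> / 3"
  have \<delta>: "0 < \<delta>" "2*\<delta> < \<epsilon>"
    using eps by (auto simp: \<delta>_def)
  define s where "s l z = indicator {0<..} z * Gmu \<mu> z * ((z powr l - z powr 0) / l)" for l z :: real
  define f where "f z = indicator {0<..} z * (Gmu \<mu> z * ln z)" for z :: real
  define w where "w z = 2 * (indicator {0..1} z * z powr (-1/2))
    + indicator {0<..} z * Gmu \<mu> z * z powr (2*\<delta>) / \<delta>" for z :: real
  have [measurable]: "Gmu \<mu> \<in> borel_measurable borel"
    by (rule borel_measurable_Gmu[OF prob sets_mu])
  have dominating: "integrable lborel w"
    unfolding w_def using integrable_powr_neg_half_unit_interval integrable_Gmu_powr[of "2*\<delta>"] \<delta>
    by auto
  have lim: "AE z in lborel. ((\<lambda>l. s l z) \<longlongrightarrow> f z) (at_right 0)"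
  proof (rule AE_I2)
    fix z :: real
    show "((\<lambda>l. s l z) \<longlongrightarrow> f z) (at_right 0)"
    proof (cases "0 < z")
      case True
      then have "((\<lambda>l. Gmu \<mu> z * ((z powr l - 1) / l)) \<longlongrightarrow> Gmu \<mu> z * ln z) (at_right 0)"
        by (intro tendsto_mult_left tendsto_powr_diff_quotient)
      then show ?thesis
        using True by (simp add: s_def f_def)
    qed (simp add: s_def f_def)
  qed
  have bound: "\<forall>\<^sub>F l in at_right 0. AE z in lborel. norm (s l z) \<le> w z"
    using eventually_at_right_0_less[OF \<delta>(1)]
    by eventually_elim (use abs_Gmu_diff_quotient_le[OF prob] in \<open>auto simp: s_def w_def\<close>)
  have measurable: "f \<in> borel_measurable lborel" "s l \<in> borel_measurable lborel" for l
    unfolding f_def[abs_def] s_def[abs_def] by measurable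
  note DCT = integral_dominated_convergence_at_right_0[OF measurable dominating lim bound]
  have "\<forall>\<^sub>F l in at_right 0. ((M l - M 0) / l - M 0) / (l + 1) = integral\<^sup>L lborel (s l)"
    using eventually_at_right_0_less[OF eps]
  proof eventually_elim
    case (elim l)
    have "integral\<^sup>L lborel (s l) = (\<integral>z. (indicator {0<..} z * Gmu \<mu> z * z powr l
        - indicator {0<..} z * Gmu \<mu> z * z powr 0) / l \<partial>lborel)"
      unfolding s_def by (simp add: algebra_simps diff_divide_distrib)
    also have "\<dots> = (M l / (l+1) - M 0 / (0+1)) / l"
      using integrable_Gmu_powr[of l] integrable_Gmu_powr[of 0] integral_Gmu_powr[of l] integral_Gmu_powr[of 0]
        elim eps
      by (simp add: integral_diff)
    also have "\<dots> = ((M l - M 0) / l - M 0) / (l + 1)"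
      using elim by (simp add: field_simps)
    finally show ?case ..
  qed
  moreover have "((\<lambda>l. ((M l - M 0) / l - M 0) / (l + 1))
      \<longlongrightarrow> ((\<integral>x. x * ln x \<partial>\<mu>) - M 0) / (0 + 1)) (at_right 0)"
    by (intro tendsto_intros M_diff_quotient_tendsto) auto
  ultimately have "((\<lambda>l. integral\<^sup>L lborel (s l)) \<longlongrightarrow> (\<integral>x. x * ln x \<partial>\<mu>) - 1) (at_right 0)"
    unfolding M_0 by (auto intro: Lim_transform_eventually)
  then have "integral\<^sup>L lborel f = (\<integral>x. x * ln x \<partial>\<mu>) - 1"
    using DCT(1) by (intro tendsto_unique) auto
  then show "(LINT z:{0<..}|lborel. Gmu \<mu> z * ln z) = (\<integral>x. x * ln x \<partial>\<mu>) - 1"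
    unfolding f_def set_lebesgue_integral_def by simp
  show "set_integrable lborel {0<..} (\<lambda>z. Gmu \<mu> z * ln z)"
    using DCT(2) unfolding f_def set_integrable_def by simp
qed

lemma relent_le_of_mem_Umu:
  assumes P: "prob_space P" and QU: "Q \<in> Umu \<mu> P"
  shows "relent Q P \<le> ereal (\<integral>x. x * ln x \<partial>\<mu>)"
proof -
  have Q: "prob_space Q" "sets Q = sets P" "absolutely_continuous P Q"
    and LQ: "\<And>l. 0 < l \<Longrightarrow> LambdaQ Q (\<lambda>x. ln (dens P Q x)) l \<le> Lambda_mu \<mu> l"
    using QU unfolding Umu_def by auto
  have "LambdaQ Q (\<lambda>x. ln (dens P Q x)) (\<epsilon>/2) \<noteq> \<infinity>"
    using LQ[of "\<epsilon>/2"] Lambda_mu_finite[of "\<epsilon>/2"] eps by auto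
  then have int: "integrable Q (\<lambda>x. ln (dens P Q x))"
    using integrable_ln_dens[OF P Q, of "\<epsilon>/2"] eps by simp
  define c where "c = (\<integral>x. ln (dens P Q x) \<partial>Q)"
  have "\<forall>\<^sub>F l in at_right 0. c \<le> real_of_ereal (Lambda_mu \<mu> l) / l"
    using eventually_at_right_0_less[OF eps]
  proof eventually_elim
    case (elim l)
    have "ereal (l * c) \<le> Lambda_mu \<mu> l"
      unfolding c_def using order_trans[OF scaled_mean_le_LambdaQ[OF Q(1) int] LQ] elim by simp
    then show ?case
      using elim Lambda_mu_eq_ln_M[of l] by (simp add: field_simps)
  qed
  moreover have "((\<lambda>l. real_of_ereal (Lambda_mu \<mu> l) / l) \<longlongrightarrow> (\<integral>x. x * ln x \<partial>\<mu>)) (at_right 0)"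
    using Lambda_mu_has_derivative Lambda_mu_eq_ln_M[of 0] eps M_0
    by (simp add: has_field_derivative_iff at_within_Ici_at_right)
  ultimately have "c \<le> (\<integral>x. x * ln x \<partial>\<mu>)"
    by (intro tendsto_lowerbound) auto
  then show ?thesis
    using relent_eq_integral[OF Q(2,3) int] by (simp add: c_def)
qed

end

theorem mainTheorem4:
  fixes \<mu> :: "real measure" and P :: "'a measure"
  assumes mu_prob: "prob_space \<mu>"
    and mu_sets: "sets \<mu> = sets borel"
    and mu_nonneg: "AE x in \<mu>. 0 \<le> x"
    and mu_mean: "integrable \<mu> (\<lambda>x. x)" "(\<integral>x. x \<partial>\<mu>) = 1"
    and mu_finite: "\<exists>\<epsilon>>0. \<forall>l\<in>{0..<\<epsilon>}. Lambda_mu \<mu> l < \<infinity>"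
    and P_prob: "prob_space P"
  shows
    "set_integrable lborel {0<..} (\<lambda>z. Gmu \<mu> z * ln z)
     \<and> ((\<lambda>l. real_of_ereal (Lambda_mu \<mu> l)) has_real_derivative
          (1 + (LINT z:{0<..}|lborel. Gmu \<mu> z * ln z))) (at 0 within {0..})
     \<and> (\<forall>Q. prob_space Q \<and> sets Q = sets P \<and> absolutely_continuous P Q
            \<and> distr P borel (dens P Q) = \<mu> \<longrightarrow>
              Q \<in> Umu \<mu> P
              \<and> (\<forall>l\<ge>0. LambdaQ Q (\<lambda>x. ln (dens P Q x)) l = Lambda_mu \<mu> l)
              \<and> relent Q P = ereal (1 + (LINT z:{0<..}|lborel. Gmu \<mu> z * ln z)))
     \<and> (\<forall>Q\<in>Umu \<mu> P. relent Q P \<le> ereal (1 + (LINT z:{0<..}|lborel. Gmu \<mu> z * ln z)))"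
proof -
  obtain \<epsilon> where "\<epsilon> > 0" "\<forall>l\<in>{0..<\<epsilon>}. Lambda_mu \<mu> l < \<infinity>"
    using mu_finite by blast
  then interpret mean_one_law \<mu> \<epsilon>
    by (intro mean_one_law.intro mu_prob mu_sets mu_nonneg mu_mean(2)) auto
  have entropy: "1 + (LINT z:{0<..}|lborel. Gmu \<mu> z * ln z) = (\<integral>x. x * ln x \<partial>\<mu>)"
    using integral_Gmu_ln by simp
  have of_law: "Q \<in> Umu \<mu> P \<and> (\<forall>l\<ge>0. LambdaQ Q (\<lambda>x. ln (dens P Q x)) l = Lambda_mu \<mu> l)
      \<and> relent Q P = ereal (\<integral>x. x * ln x \<partial>\<mu>)"
    if Q: "prob_space Q" "sets Q = sets P" "absolutely_continuous P Q"
      and law: "distr P borel (dens P Q) = \<mu>" for Q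
  proof -
    have "\<forall>l\<ge>0. LambdaQ Q (\<lambda>x. ln (dens P Q x)) l = Lambda_mu \<mu> l"
      using LambdaQ_ln_dens_eq_Lambda_mu_distr[OF P_prob Q] unfolding law by simp
    moreover have "relent Q P = ereal (\<integral>x. x * ln x \<partial>\<mu>)"
      using relent_eq_integral_distr[OF P_prob Q] integrable_x_ln_x unfolding law by simp
    ultimately show ?thesis
      using Q unfolding Umu_def by simp
  qed
  show ?thesis
    unfolding entropy
    using set_integrable_Gmu_ln Lambda_mu_has_derivative of_law relent_le_of_mem_Umu[OF P_prob]
    by (intro conjI allI impI ballI) auto
qed

end
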